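(* Let $G$ be a grid-labelled graph of type $(a,b)$ with at least one edge that is row stratified or column stratified. Then $\rho(G)$ is separable if and only if $G$ satisfies the degree criterion.
   Context: A grid-labelled graph of type $(a,b)$ is a simple graph $G$ whose vertex set is the grid $[a]\times[b]$. If $G$ has $m\ge1$ edges, $\rho(G)=L(G)/(2m)$, where $L(G)$ is the combinatorial Laplacian, viewed as a density matrix on $\mathbb{C}^a\otimes\mathbb{C}^b$ with vertex $(i,j)$ corresponding to $|i\rangle\otimes|j\rangle$; separable means a convex combination of tensor products of density matrices. An edge $\{(i,j),(k,l)\}$ is diagonal if $i\neq k$ and $j\neq l$. $G$ is row stratified if every diagonal edge $\{(i,j),(k,l)\}$ satisfies $|i-k|=1$, and column stratified if every diagonal edge satisfies $|j-l|=1$. The partial transpose $\Gamma(G)$ is the grid-labelled graph with edge set $\{\{(k,j),(i,l)\}:\{(i,j),(k,l)\}\in E(G)\}$; $G$ satisfies the degree criterion if every vertex has the same degree in $G$ and in $\Gamma(G)$. *)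

theory Defs
  imports Complex_Main
begin

text \<open>Vertices are pairs (i,j) with 0 \<le> i < a, 0 \<le> j < b (0-based version of [a] x [b]).
  Vertex (i,j) corresponds to basis vector |i> \<otimes> |j>.\<close>

type_synonym vert = "nat \<times> nat"

definition grid :: "nat \<Rightarrow> nat \<Rightarrow> vert set" where
  "grid a b = {0..<a} \<times> {0..<b}"

definition grid_graph :: "nat \<Rightarrow> nat \<Rightarrow> vert set set \<Rightarrow> bool" where
  "grid_graph a b E \<longleftrightarrow> (\<forall>e\<in>E. \<exists>u v. u \<noteq> v \<and> u \<in> grid a b \<and> v \<in> grid a b \<and> e = {u, v})"

definition degree :: "vert set set \<Rightarrow> vert \<Rightarrow> nat" where
  "degree E v = card {e \<in> E. v \<in> e}"

definition laplacian :: "vert set set \<Rightarrow> vert \<Rightarrow> vert \<Rightarrow> complex" where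
  "laplacian E u v = (if u = v then of_nat (degree E u) else if {u, v} \<in> E then -1 else 0)"

definition rho :: "vert set set \<Rightarrow> vert \<Rightarrow> vert \<Rightarrow> complex" where
  "rho E u v = laplacian E u v / of_nat (2 * card E)"

definition density_matrix :: "nat \<Rightarrow> (nat \<Rightarrow> nat \<Rightarrow> complex) \<Rightarrow> bool" where
  "density_matrix n M \<longleftrightarrow>
     (\<forall>i<n. \<forall>j<n. M j i = cnj (M i j)) \<and>
     (\<forall>x :: nat \<Rightarrow> complex. Im (\<Sum>i<n. \<Sum>j<n. cnj (x i) * M i j * x j) = 0
                         \<and> Re (\<Sum>i<n. \<Sum>j<n. cnj (x i) * M i j * x j) \<ge> 0) \<and>
     (\<Sum>i<n. M i i) = 1"

definition separable :: "nat \<Rightarrow> nat \<Rightarrow> (vert \<Rightarrow> vert \<Rightarrow> complex) \<Rightarrow> bool" where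
  "separable a b R \<longleftrightarrow>
     (\<exists>(N::nat) (p :: nat \<Rightarrow> real) A B.
        (\<forall>t<N. p t \<ge> 0) \<and> (\<Sum>t<N. p t) = 1 \<and>
        (\<forall>t<N. density_matrix a (A t) \<and> density_matrix b (B t)) \<and>
        (\<forall>i<a. \<forall>j<b. \<forall>k<a. \<forall>l<b.
            R (i, j) (k, l) = (\<Sum>t<N. complex_of_real (p t) * A t i k * B t j l)))"

definition row_stratified :: "vert set set \<Rightarrow> bool" where
  "row_stratified E \<longleftrightarrow> (\<forall>i j k l. {(i, j), (k, l)} \<in> E \<and> i \<noteq> k \<and> j \<noteq> l
       \<longrightarrow> \<bar>int i - int k\<bar> = 1)"

definition column_stratified :: "vert set set \<Rightarrow> bool" where
  "column_stratified E \<longleftrightarrow> (\<forall>i j k l. {(i, j), (k, l)} \<in> E \<and> i \<noteq> k \<and> j \<noteq> l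
       \<longrightarrow> \<bar>int j - int l\<bar> = 1)"

definition partial_transpose :: "vert set set \<Rightarrow> vert set set" where
  "partial_transpose E = {{(k, j), (i, l)} | i j k l. {(i, j), (k, l)} \<in> E}"

definition degree_criterion :: "nat \<Rightarrow> nat \<Rightarrow> vert set set \<Rightarrow> bool" where
  "degree_criterion a b E \<longleftrightarrow> (\<forall>v\<in>grid a b. degree E v = degree (partial_transpose E) v)"

end

theory Submission
  imports Defs
begin

text \<open>Necessity: the all-ones vector 1 lies in the kernel of L(G). In a separable decomposition
  of rho(G) each product term A \<otimes> B contributes (1, A 1) (1, B 1) \<ge> 0 to (1, rho(G) 1) = 0, so
  one of its factors annihilates 1. Consequently the partial transpose of rho(G) also has vanishing
  row sums, and these row sums are the differences of the degrees in G and in its partial transpose.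

  Sufficiency: for a row stratified G satisfying the degree criterion, L(G) is shown to be a
  nonnegative combination of rank-one product operators, by induction on the number of edges. The
  Laplacian of an edge inside a row or a column is itself such an operator, and deleting the edge
  preserves the degree criterion. If every edge is diagonal, the edges between the lowest row
  carrying an edge and the next row define a digraph on the columns, which the degree criterion
  makes balanced; it therefore contains a directed cycle. The corresponding edges form a perfect
  matching whose Laplacian is, by a discrete Fourier transform along the cycle, an average of
  rank-one product operators; deleting these edges again preserves the criterion. Exchanging the
  two tensor factors reduces column stratified graphs to the row stratified case.\<close>

section \<open>Grid graphs, neighbourhoods and the degree criterion\<close>

definition loopless :: "vert set set \<Rightarrow> bool" where
  "loopless E \<longleftrightarrow> (\<forall>e\<in>E. \<exists>u v. u \<noteq> v \<and> e = {u, v})"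

definition neighbours :: "vert set set \<Rightarrow> vert \<Rightarrow> vert set" where
  "neighbours E v = {w. w \<noteq> v \<and> {v, w} \<in> E}"

definition pt_neighbours :: "vert set set \<Rightarrow> vert \<Rightarrow> vert set" where
  "pt_neighbours E v = {(k, l). (k, l) \<noteq> v \<and> {(fst v, l), (k, snd v)} \<in> E}"

lemma finite_grid [simp]: "finite (grid a b)"
  unfolding grid_def by simp

lemma grid_graph_loopless: "grid_graph a b E \<Longrightarrow> loopless E"
  unfolding grid_graph_def loopless_def by blast

lemma grid_graph_subset: "grid_graph a b E \<Longrightarrow> F \<subseteq> E \<Longrightarrow> grid_graph a b F"
  unfolding grid_graph_def by blast

lemma edge_in_grid:
  assumes "grid_graph a b E" and "{x, y} \<in> E"
  shows "x \<in> grid a b" and "y \<in> grid a b"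
proof -
  obtain u v where "u \<in> grid a b" "v \<in> grid a b" "{x, y} = {u, v}"
    using assms unfolding grid_graph_def by meson
  then show "x \<in> grid a b" "y \<in> grid a b" by (auto simp: doubleton_eq_iff)
qed

lemma grid_graph_finite:
  assumes "grid_graph a b E"
  shows "finite E"
proof (rule finite_subset)
  show "E \<subseteq> Pow (grid a b)"
  proof
    fix e assume "e \<in> E"
    then obtain u v where "u \<in> grid a b" "v \<in> grid a b" "e = {u, v}"
      using assms unfolding grid_graph_def by meson
    then show "e \<in> Pow (grid a b)" by simp
  qed
qed simp

lemma neighbours_subset_grid: "grid_graph a b E \<Longrightarrow> neighbours E v \<subseteq> grid a b"
  unfolding neighbours_def using edge_in_grid by blast

lemma pt_neighbours_subset_grid:
  assumes "grid_graph a b E"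
  shows "pt_neighbours E v \<subseteq> grid a b"
proof
  fix w assume "w \<in> pt_neighbours E v"
  then obtain k l where w: "w = (k, l)" and e: "{(fst v, l), (k, snd v)} \<in> E"
    unfolding pt_neighbours_def by blast
  show "w \<in> grid a b"
    using edge_in_grid[OF assms e] unfolding w grid_def by auto
qed

lemma finite_neighbours: "grid_graph a b E \<Longrightarrow> finite (neighbours E v)"
  using finite_subset[OF neighbours_subset_grid finite_grid] .

lemma finite_pt_neighbours: "grid_graph a b E \<Longrightarrow> finite (pt_neighbours E v)"
  using finite_subset[OF pt_neighbours_subset_grid finite_grid] .

lemma degree_eq_card_neighbours:
  assumes "loopless E"
  shows "degree E v = card (neighbours E v)"
proof -
  have "bij_betw (\<lambda>w. {v, w}) (neighbours E v) {e \<in> E. v \<in> e}"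
  proof (rule bij_betwI')
    fix x y assume "x \<in> neighbours E v" "y \<in> neighbours E v"
    then have "x \<noteq> v" "y \<noteq> v" unfolding neighbours_def by simp_all
    then show "({v, x} = {v, y}) = (x = y)" by (metis doubleton_eq_iff)
  next
    fix x assume "x \<in> neighbours E v"
    then show "{v, x} \<in> {e \<in> E. v \<in> e}" unfolding neighbours_def by simp
  next
    fix e assume "e \<in> {e \<in> E. v \<in> e}"
    then obtain x y where xy: "x \<noteq> y" "e = {x, y}" "e \<in> E" "v \<in> e"
      using assms unfolding loopless_def by (metis (mono_tags, lifting) mem_Collect_eq)
    show "\<exists>w\<in>neighbours E v. e = {v, w}"
    proof (cases "v = x")
      case True
      then show ?thesis using xy unfolding neighbours_def by (intro bexI[of _ y]) auto
    next
      case False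
      then have "v = y" using xy by simp
      then show ?thesis using xy unfolding neighbours_def
        by (intro bexI[of _ x]) (auto simp: insert_commute)
    qed
  qed
  then show ?thesis
    unfolding degree_def by (simp add: bij_betw_same_card)
qed

lemma partial_transpose_iff:
  "{(x, y), (x', y')} \<in> partial_transpose E \<longleftrightarrow> {(x', y), (x, y')} \<in> E"
proof
  assume "{(x, y), (x', y')} \<in> partial_transpose E"
  then obtain i j k l where h: "{(x, y), (x', y')} = {(k, j), (i, l)}" "{(i, j), (k, l)} \<in> E"
    unfolding partial_transpose_def by blast
  from h(1) have "(x, y) = (k, j) \<and> (x', y') = (i, l) \<or> (x, y) = (i, l) \<and> (x', y') = (k, j)"
    by (auto simp: doubleton_eq_iff)
  then show "{(x', y), (x, y')} \<in> E"
    using h(2) by (auto simp: insert_commute)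
next
  assume "{(x', y), (x, y')} \<in> E"
  then show "{(x, y), (x', y')} \<in> partial_transpose E"
    unfolding partial_transpose_def by blast
qed

lemma loopless_partial_transpose:
  assumes "loopless E"
  shows "loopless (partial_transpose E)"
  unfolding loopless_def
proof
  fix e assume "e \<in> partial_transpose E"
  then obtain i j k l where e: "e = {(k, j), (i, l)}" and "{(i, j), (k, l)} \<in> E"
    unfolding partial_transpose_def by blast
  then have "(i, j) \<noteq> (k, l)"
    using assms unfolding loopless_def by (metis doubleton_eq_iff)
  then show "\<exists>u v. u \<noteq> v \<and> e = {u, v}"
    using e by blast
qed

lemma neighbours_partial_transpose:
  "neighbours (partial_transpose E) v = pt_neighbours E v"
proof -
  obtain i j where "v = (i, j)" by fastforce
  then show ?thesis
    unfolding neighbours_def pt_neighbours_def using partial_transpose_iff[of i j]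
    by (auto simp: insert_commute)
qed

lemma degree_criterion_iff:
  assumes "grid_graph a b E"
  shows "degree_criterion a b E \<longleftrightarrow>
    (\<forall>v\<in>grid a b. card (neighbours E v) = card (pt_neighbours E v))"
  using assms
  by (simp add: degree_criterion_def degree_eq_card_neighbours grid_graph_loopless
      loopless_partial_transpose neighbours_partial_transpose)

lemma degree_criterion_diff:
  assumes g: "grid_graph a b E" and "Z \<subseteq> E"
    and Z_balanced: "\<And>v. card (neighbours Z v) = card (pt_neighbours Z v)"
    and "degree_criterion a b E"
  shows "degree_criterion a b (E - Z)"
proof -
  have gZ: "grid_graph a b Z" and gEZ: "grid_graph a b (E - Z)"
    using grid_graph_subset[OF g] \<open>Z \<subseteq> E\<close> by blast+
  have "card (neighbours (E - Z) v) = card (pt_neighbours (E - Z) v)" if "v \<in> grid a b" for v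
  proof -
    have "neighbours (E - Z) v = neighbours E v - neighbours Z v"
      and "pt_neighbours (E - Z) v = pt_neighbours E v - pt_neighbours Z v"
      and "neighbours Z v \<subseteq> neighbours E v" and "pt_neighbours Z v \<subseteq> pt_neighbours E v"
      using \<open>Z \<subseteq> E\<close> unfolding neighbours_def pt_neighbours_def by blast+
    then show ?thesis
      using assms(4) that Z_balanced finite_neighbours[OF gZ] finite_pt_neighbours[OF gZ]
      by (simp add: card_Diff_subset degree_criterion_iff[OF g])
  qed
  then show ?thesis
    using degree_criterion_iff[OF gEZ] by blast
qed

lemma laplacian_neighbours:
  assumes "loopless E"
  shows "laplacian E u v =
    (if u = v then of_nat (card (neighbours E u)) else if {u, v} \<in> E then -1 else 0)"
  unfolding laplacian_def degree_eq_card_neighbours[OF assms] ..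

lemma laplacian_diff:
  assumes g: "grid_graph a b E" and "Z \<subseteq> E"
  shows "laplacian E u v = laplacian (E - Z) u v + laplacian Z u v"
proof -
  have gZ: "grid_graph a b Z" and gEZ: "grid_graph a b (E - Z)"
    using grid_graph_subset[OF g] \<open>Z \<subseteq> E\<close> by blast+
  have "neighbours E u = neighbours (E - Z) u \<union> neighbours Z u"
    and "neighbours (E - Z) u \<inter> neighbours Z u = {}"
    using \<open>Z \<subseteq> E\<close> unfolding neighbours_def by auto
  then have "card (neighbours E u) = card (neighbours (E - Z) u) + card (neighbours Z u)"
    by (simp add: card_Un_disjoint finite_neighbours[OF gZ] finite_neighbours[OF gEZ])
  then show ?thesis
    using \<open>Z \<subseteq> E\<close> by (cases "u = v") (auto simp: laplacian_def degree_eq_card_neighbours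
        grid_graph_loopless[OF g] grid_graph_loopless[OF gZ] grid_graph_loopless[OF gEZ])
qed

lemma handshake:
  assumes g: "grid_graph a b E"
  shows "(\<Sum>v\<in>grid a b. card (neighbours E v)) = 2 * card E"
proof -
  have "(\<Sum>v\<in>grid a b. card (neighbours E v)) = (\<Sum>v\<in>grid a b. \<Sum>e\<in>E. if v \<in> e then 1 else 0)"
    using grid_graph_finite[OF g]
    by (simp add: degree_eq_card_neighbours[OF grid_graph_loopless[OF g], symmetric]
        degree_def sum.inter_filter[symmetric])
  also have "\<dots> = (\<Sum>e\<in>E. \<Sum>v\<in>grid a b. if v \<in> e then 1 else 0)"
    by (rule sum.swap)
  also have "\<dots> = (\<Sum>e\<in>E. 2)"
  proof (rule sum.cong[OF refl])
    fix e assume "e \<in> E"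
    then obtain x y where "x \<noteq> y" "x \<in> grid a b" "y \<in> grid a b" "e = {x, y}"
      using g unfolding grid_graph_def by meson
    then have "{v \<in> grid a b. v \<in> e} = {x, y}"
      by blast
    moreover have "(\<Sum>v\<in>grid a b. if v \<in> e then 1 else 0) = card {v \<in> grid a b. v \<in> e}"
      by (simp add: sum.inter_filter[symmetric])
    ultimately show "(\<Sum>v\<in>grid a b. if v \<in> e then 1 else 0) = (2::nat)"
      using \<open>x \<noteq> y\<close> by simp
  qed
  finally show ?thesis by simp
qed

lemma sum_grid: "(\<Sum>i<a. \<Sum>j<b. f (i, j)) = (\<Sum>v\<in>grid a b. f v)"
  unfolding grid_def by (simp add: sum.cartesian_product lessThan_atLeast0)

lemma sum_grid_pairs:
  "(\<Sum>u\<in>grid a b. \<Sum>v\<in>grid a b. f u v) = (\<Sum>i<a. \<Sum>j<b. \<Sum>k<a. \<Sum>l<b. f (i, l) (k, j))"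
proof -
  have "(\<Sum>u\<in>grid a b. \<Sum>v\<in>grid a b. f u v) = (\<Sum>i<a. \<Sum>l<b. \<Sum>k<a. \<Sum>j<b. f (i, l) (k, j))"
    by (simp add: sum_grid[symmetric])
  also have "\<dots> = (\<Sum>i<a. \<Sum>l<b. \<Sum>j<b. \<Sum>k<a. f (i, l) (k, j))"
    by (rule sum.cong[OF refl], rule sum.cong[OF refl], rule sum.swap)
  also have "\<dots> = (\<Sum>i<a. \<Sum>j<b. \<Sum>l<b. \<Sum>k<a. f (i, l) (k, j))"
    by (rule sum.cong[OF refl], rule sum.swap)
  also have "\<dots> = (\<Sum>i<a. \<Sum>j<b. \<Sum>k<a. \<Sum>l<b. f (i, l) (k, j))"
    by (rule sum.cong[OF refl], rule sum.cong[OF refl], rule sum.swap)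
  finally show ?thesis .
qed

lemma sum_product_terms:
  fixes f :: "nat \<Rightarrow> 'a::comm_semiring_1"
  shows "(\<Sum>k<a. \<Sum>l<b. \<Sum>t<N. f t * g t k * h t l)
    = (\<Sum>t<N. f t * (\<Sum>k<a. g t k) * (\<Sum>l<b. h t l))"
proof -
  have "(\<Sum>t<N. f t * (\<Sum>k<a. g t k) * (\<Sum>l<b. h t l))
      = (\<Sum>t<N. \<Sum>k<a. \<Sum>l<b. f t * g t k * h t l)"
    unfolding mult.assoc sum_product by (simp add: sum_distrib_left)
  also have "\<dots> = (\<Sum>k<a. \<Sum>t<N. \<Sum>l<b. f t * g t k * h t l)"
    by (rule sum.swap)
  also have "\<dots> = (\<Sum>k<a. \<Sum>l<b. \<Sum>t<N. f t * g t k * h t l)"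
    by (rule sum.cong[OF refl], rule sum.swap)
  finally show ?thesis ..
qed

section \<open>Necessity\<close>

lemma laplacian_row_sum:
  assumes g: "grid_graph a b E" and u: "u \<in> grid a b"
  shows "(\<Sum>v\<in>grid a b. laplacian E u v) = 0"
proof -
  have lE: "loopless E" using g by (rule grid_graph_loopless)
  have "(\<Sum>v\<in>grid a b - {u}. laplacian E u v)
      = (\<Sum>v\<in>grid a b - {u}. if v \<in> neighbours E u then -1 else 0)"
    by (rule sum.cong[OF refl]) (auto simp: laplacian_neighbours[OF lE] neighbours_def)
  also have "\<dots> = - of_nat (card (neighbours E u))"
  proof -
    have "(grid a b - {u}) \<inter> neighbours E u = neighbours E u"
      using neighbours_subset_grid[OF g] unfolding neighbours_def by blast
    then show ?thesis by (simp add: sum.If_cases)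
  qed
  finally show ?thesis
    using u by (simp add: sum.remove laplacian_neighbours[OF lE])
qed

lemma laplacian_pt_row_sum:
  assumes g: "grid_graph a b E" and ij: "(i, j) \<in> grid a b"
  shows "(\<Sum>w\<in>grid a b. laplacian E (i, snd w) (fst w, j))
    = of_nat (card (neighbours E (i, j))) - of_nat (card (pt_neighbours E (i, j)))"
proof -
  have lE: "loopless E" using g by (rule grid_graph_loopless)
  have "(\<Sum>w\<in>grid a b - {(i, j)}. laplacian E (i, snd w) (fst w, j))
      = (\<Sum>w\<in>grid a b - {(i, j)}. if w \<in> pt_neighbours E (i, j) then -1 else 0)"
  proof (rule sum.cong[OF refl])
    fix w assume w: "w \<in> grid a b - {(i, j)}"
    obtain k l where kl: "w = (k, l)" by fastforce
    have ne: "(i, l) \<noteq> (k, j)" and ne': "(k, l) \<noteq> (i, j)" using w kl by auto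
    have "laplacian E (i, l) (k, j) = (if {(i, l), (k, j)} \<in> E then -1 else 0)"
      unfolding laplacian_neighbours[OF lE] if_not_P[OF ne] ..
    moreover have "(k, l) \<in> pt_neighbours E (i, j) \<longleftrightarrow> {(i, l), (k, j)} \<in> E"
      using ne' unfolding pt_neighbours_def by simp
    ultimately show "laplacian E (i, snd w) (fst w, j) = (if w \<in> pt_neighbours E (i, j) then -1 else 0)"
      unfolding kl by simp
  qed
  also have "\<dots> = - of_nat (card (pt_neighbours E (i, j)))"
  proof -
    have "(grid a b - {(i, j)}) \<inter> pt_neighbours E (i, j) = pt_neighbours E (i, j)"
      using pt_neighbours_subset_grid[OF g] unfolding pt_neighbours_def by blast
    then show ?thesis by (simp add: sum.If_cases)
  qed
  finally show ?thesis
    using ij by (simp add: sum.remove laplacian_neighbours[OF lE])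
qed

lemma density_matrix_total_sum:
  assumes "density_matrix n M"
  shows "Im (\<Sum>i<n. \<Sum>j<n. M i j) = 0" and "Re (\<Sum>i<n. \<Sum>j<n. M i j) \<ge> 0"
proof -
  have "\<forall>x :: nat \<Rightarrow> complex. Im (\<Sum>i<n. \<Sum>j<n. cnj (x i) * M i j * x j) = 0
      \<and> Re (\<Sum>i<n. \<Sum>j<n. cnj (x i) * M i j * x j) \<ge> 0"
    using assms unfolding density_matrix_def by blast
  from spec[OF this, of "\<lambda>_. 1"]
  show "Im (\<Sum>i<n. \<Sum>j<n. M i j) = 0" and "Re (\<Sum>i<n. \<Sum>j<n. M i j) \<ge> 0"
    by simp_all
qed

text \<open>With r = M 1, the quadratic form of 1 - t r equals -2 t |r|^2 + t^2 (r, M r) once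
  (1, M 1) = 0; positivity for all small t > 0 forces r = 0.\<close>
lemma density_matrix_row_sums_vanish:
  assumes dm: "density_matrix n M" and total: "(\<Sum>i<n. \<Sum>j<n. M i j) = 0" and "i < n"
  shows "(\<Sum>j<n. M i j) = 0"
proof -
  define r where "r i = (\<Sum>j<n. M i j)" for i
  define q where "q x = (\<Sum>i<n. \<Sum>j<n. cnj (x i) * M i j * x j)" for x
  define S where "S = (\<Sum>i<n. (cmod (r i))\<^sup>2)"
  have herm: "\<And>i j. i < n \<Longrightarrow> j < n \<Longrightarrow> M j i = cnj (M i j)"
    and pos: "\<And>x. Im (q x) = 0 \<and> Re (q x) \<ge> 0"
    using dm unfolding density_matrix_def q_def by blast+
  have col_sum: "(\<Sum>i<n. M i j) = cnj (r j)" if "j < n" for j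
    unfolding r_def using herm[OF that] by (simp add: sum.cong[of _ _ "\<lambda>i. M i j"])
  have S_sum: "(\<Sum>i<n. cnj (r i) * r i) = of_real S"
  proof -
    have "cnj (r i) * r i = of_real ((cmod (r i))\<^sup>2)" for i
      by (subst complex_norm_square) (simp add: mult.commute)
    then show ?thesis unfolding S_def of_real_sum by simp
  qed
  have expand: "Re (q (\<lambda>i. 1 - of_real t * r i)) = - 2 * t * S + t\<^sup>2 * Re (q r)" for t :: real
  proof -
    have "(\<Sum>i<n. \<Sum>j<n. M i j * r j) = of_real S"
    proof -
      have "(\<Sum>i<n. \<Sum>j<n. M i j * r j) = (\<Sum>j<n. (\<Sum>i<n. M i j) * r j)"
        by (subst sum.swap) (simp add: sum_distrib_right)
      then show ?thesis by (simp add: col_sum S_sum)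
    qed
    moreover have "(\<Sum>i<n. \<Sum>j<n. cnj (r i) * M i j) = of_real S"
      using S_sum by (simp add: sum_distrib_left[symmetric] r_def)
    moreover have "q (\<lambda>i. 1 - of_real t * r i) = (\<Sum>i<n. \<Sum>j<n. M i j)
        - of_real t * (\<Sum>i<n. \<Sum>j<n. M i j * r j)
        - of_real t * (\<Sum>i<n. \<Sum>j<n. cnj (r i) * M i j) + (of_real t)\<^sup>2 * q r"
    proof -
      have "cnj (1 - of_real t * r i) * M i j * (1 - of_real t * r j)
          = M i j - of_real t * (M i j * r j) - of_real t * (cnj (r i) * M i j)
            + (of_real t)\<^sup>2 * (cnj (r i) * M i j * r j)" for i j
        by (simp add: algebra_simps power2_eq_square)
      then show ?thesis
        unfolding q_def by (simp add: sum.distrib sum_subtractf sum_distrib_left)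
    qed
    ultimately show ?thesis using total by simp
  qed
  have "S \<le> 0"
  proof (rule ccontr)
    assume "\<not> S \<le> 0"
    define t where "t = S / (Re (q r) + 1)"
    have "t > 0" and "t * Re (q r) < S"
      unfolding t_def using \<open>\<not> S \<le> 0\<close> pos[of r] by (simp_all add: field_simps)
    moreover have "2 * t * S \<le> t * (t * Re (q r))"
      using pos[of "\<lambda>i. 1 - of_real t * r i"] expand[of t] by (simp add: power2_eq_square)
    then have "2 * S \<le> t * Re (q r)"
      using \<open>t > 0\<close> by (simp add: mult.assoc)
    ultimately show False
      using \<open>\<not> S \<le> 0\<close> by linarith
  qed
  then have "S = 0"
    unfolding S_def by (simp add: antisym sum_nonneg)
  then have "\<forall>i\<in>{..<n}. (cmod (r i))\<^sup>2 = 0"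
    unfolding S_def by (subst sum_nonneg_eq_0_iff[symmetric]) auto
  then show ?thesis
    using \<open>i < n\<close> unfolding r_def by simp
qed

lemma density_matrix_col_sums_vanish:
  assumes dm: "density_matrix n M" and total: "(\<Sum>i<n. \<Sum>j<n. M i j) = 0" and "j < n"
  shows "(\<Sum>i<n. M i j) = 0"
proof -
  have herm: "\<And>i j. i < n \<Longrightarrow> j < n \<Longrightarrow> M j i = cnj (M i j)"
    using dm unfolding density_matrix_def by blast
  have "(\<Sum>i<n. M i j) = (\<Sum>i<n. cnj (M j i))"
  proof (rule sum.cong[OF refl])
    fix i assume "i \<in> {..<n}"
    then show "M i j = cnj (M j i)" using herm[of j i] \<open>j < n\<close> by simp
  qed
  also have "\<dots> = cnj (\<Sum>i<n. M j i)"
    by simp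
  also have "(\<Sum>i<n. M j i) = 0"
    using density_matrix_row_sums_vanish[OF assms] .
  finally show ?thesis by simp
qed

lemma density_matrix_product_sums_vanish:
  assumes "density_matrix a A" "density_matrix b B"
    and "(\<Sum>i<a. \<Sum>k<a. A i k) * (\<Sum>j<b. \<Sum>l<b. B l j) = 0" and "i < a" "j < b"
  shows "(\<Sum>k<a. A i k) * (\<Sum>l<b. B l j) = 0"
proof -
  have "(\<Sum>j<b. \<Sum>l<b. B l j) = (\<Sum>l<b. \<Sum>j<b. B l j)"
    by (rule sum.swap)
  then show ?thesis
    using assms density_matrix_row_sums_vanish[of a A] density_matrix_col_sums_vanish[of b B]
    by auto
qed

text \<open>For a separable R the total sum (1, R 1) is a nonnegative combination of the
  total sums of the factors; if it vanishes, every product term has a factor with vanishing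
  row sums, and these are exactly what the row sums of the partial transpose of R see.\<close>
lemma separable_pt_row_sums_vanish:
  assumes sep: "separable a b R"
    and total: "(\<Sum>u\<in>grid a b. \<Sum>v\<in>grid a b. R u v) = 0"
    and "i < a" "j < b"
  shows "(\<Sum>k<a. \<Sum>l<b. R (i, l) (k, j)) = 0"
proof -
  obtain N :: nat and p :: "nat \<Rightarrow> real" and A B :: "nat \<Rightarrow> nat \<Rightarrow> nat \<Rightarrow> complex"
    where p: "\<forall>t<N. p t \<ge> 0" and "sum p {..<N} = 1"
    and dm: "\<forall>t<N. density_matrix a (A t) \<and> density_matrix b (B t)"
    and dec: "\<forall>i<a. \<forall>j<b. \<forall>k<a. \<forall>l<b.
      R (i, j) (k, l) = (\<Sum>t<N. complex_of_real (p t) * A t i k * B t j l)"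
    using sep unfolding separable_def by (elim exE conjE) (rule that; assumption)
  define rA where "rA t i = (\<Sum>k<a. A t i k)" for t i
  define cB where "cB t j = (\<Sum>l<b. B t l j)" for t j
  have pt_sum: "(\<Sum>k<a. \<Sum>l<b. R (i, l) (k, j)) = (\<Sum>t<N. of_real (p t) * rA t i * cB t j)"
    if "i < a" "j < b" for i j
  proof -
    have "(\<Sum>k<a. \<Sum>l<b. R (i, l) (k, j))
        = (\<Sum>k<a. \<Sum>l<b. \<Sum>t<N. of_real (p t) * A t i k * B t l j)"
      using dec that by simp
    then show ?thesis
      unfolding rA_def cB_def sum_product_terms .
  qed
  define \<alpha> where "\<alpha> t = (\<Sum>i<a. \<Sum>k<a. A t i k)" for t
  define \<beta> where "\<beta> t = (\<Sum>j<b. \<Sum>l<b. B t l j)" for t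
  have "\<beta> t = (\<Sum>l<b. \<Sum>j<b. B t l j)" for t
    unfolding \<beta>_def by (rule sum.swap)
  then have \<alpha>: "Im (\<alpha> t) = 0" "Re (\<alpha> t) \<ge> 0"
    and \<beta>: "Im (\<beta> t) = 0" "Re (\<beta> t) \<ge> 0" if "t < N" for t
    using density_matrix_total_sum dm that unfolding \<alpha>_def by simp_all
  have "0 = (\<Sum>i<a. \<Sum>j<b. \<Sum>k<a. \<Sum>l<b. R (i, l) (k, j))"
    using total unfolding sum_grid_pairs by simp
  also have "\<dots> = (\<Sum>i<a. \<Sum>j<b. \<Sum>t<N. of_real (p t) * rA t i * cB t j)"
    using pt_sum by simp
  also have "\<dots> = (\<Sum>t<N. of_real (p t) * \<alpha> t * \<beta> t)"
    unfolding sum_product_terms \<alpha>_def \<beta>_def rA_def cB_def ..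
  also have "\<dots> = (\<Sum>t<N. of_real (p t * Re (\<alpha> t) * Re (\<beta> t)))"
    by (rule sum.cong[OF refl]) (simp add: complex_eq_iff \<alpha>(1) \<beta>(1))
  finally have "(\<Sum>t<N. p t * Re (\<alpha> t) * Re (\<beta> t)) = 0"
    by (metis of_real_eq_0_iff of_real_sum)
  moreover have "p t * Re (\<alpha> t) * Re (\<beta> t) \<ge> 0" if "t < N" for t
    using p \<alpha>(2)[OF that] \<beta>(2)[OF that] that by simp
  ultimately have "p t * Re (\<alpha> t) * Re (\<beta> t) = 0" if "t < N" for t
    using sum_nonneg_eq_0_iff[of "{..<N}" "\<lambda>t. p t * Re (\<alpha> t) * Re (\<beta> t)"] that by blast
  then have factor_zero: "p t = 0 \<or> \<alpha> t = 0 \<or> \<beta> t = 0" if "t < N" for t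
    using \<alpha>(1)[OF that] \<beta>(1)[OF that] that by (simp add: complex_eq_iff)
  have terms_vanish: "of_real (p t) * rA t i * cB t j = 0" if "t < N" for t
  proof (cases "p t = 0")
    case False
    then have "\<alpha> t * \<beta> t = 0"
      using factor_zero[OF that] by auto
    then have "rA t i * cB t j = 0"
      using density_matrix_product_sums_vanish dm that \<open>i < a\<close> \<open>j < b\<close>
      unfolding \<alpha>_def \<beta>_def rA_def cB_def by blast
    then show ?thesis
      by (simp add: mult.assoc)
  qed simp
  show ?thesis
    unfolding pt_sum[OF \<open>i < a\<close> \<open>j < b\<close>] using terms_vanish by (simp add: sum.neutral)
qed

theorem degree_criterion_if_separable:
  assumes g: "grid_graph a b E" and "E \<noteq> {}" and "separable a b (rho E)"
  shows "degree_criterion a b E"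
proof -
  have m: "of_nat (2 * card E) \<noteq> (0::complex)"
    using grid_graph_finite[OF g] \<open>E \<noteq> {}\<close> by simp
  have "(\<Sum>u\<in>grid a b. \<Sum>v\<in>grid a b. rho E u v) = 0"
    using laplacian_row_sum[OF g] by (simp add: rho_def sum_divide_distrib[symmetric])
  then have "(\<Sum>k<a. \<Sum>l<b. rho E (i, l) (k, j)) = 0" if "(i, j) \<in> grid a b" for i j
    using separable_pt_row_sums_vanish \<open>separable a b (rho E)\<close> that unfolding grid_def by auto
  then have "(\<Sum>w\<in>grid a b. laplacian E (i, snd w) (fst w, j)) = 0" if "(i, j) \<in> grid a b" for i j
    using that m sum_grid[where f = "\<lambda>w. laplacian E (i, snd w) (fst w, j)" and a = a and b = b]
    by (simp add: rho_def sum_divide_distrib[symmetric])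
  then show ?thesis
    unfolding degree_criterion_iff[OF g] using laplacian_pt_row_sum[OF g] by force
qed

section \<open>The cone of product operators\<close>

definition product_term :: "real \<Rightarrow> (nat \<Rightarrow> complex) \<Rightarrow> (nat \<Rightarrow> complex) \<Rightarrow> vert \<Rightarrow> vert \<Rightarrow> complex"
  where "product_term c u w p q = of_real c * (u (fst p) * w (snd p)) * cnj (u (fst q) * w (snd q))"

text \<open>Nonnegative combinations of the operators c |u \<otimes> w\<rangle>\<langle>u \<otimes> w|: separable operators
  up to normalisation of the trace.\<close>
definition sep_cone :: "(vert \<Rightarrow> vert \<Rightarrow> complex) \<Rightarrow> bool" where
  "sep_cone R \<longleftrightarrow> (\<exists>xs. (\<forall>(c, u, w)\<in>set xs. c \<ge> 0) \<and>
     R = (\<lambda>p q. \<Sum>(c, u, w)\<leftarrow>xs. product_term c u w p q))"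

lemma sep_cone_zero: "sep_cone (\<lambda>p q. 0)"
  unfolding sep_cone_def by (rule exI[of _ "[]"]) simp

lemma sep_cone_product_term: "c \<ge> 0 \<Longrightarrow> sep_cone (product_term c u w)"
  unfolding sep_cone_def by (rule exI[of _ "[(c, u, w)]"]) simp

lemma sep_cone_add:
  assumes "sep_cone R" and "sep_cone S"
  shows "sep_cone (\<lambda>p q. R p q + S p q)"
proof -
  obtain xs ys where "\<forall>(c, u, w)\<in>set xs. c \<ge> 0" "\<forall>(c, u, w)\<in>set ys. c \<ge> 0"
    and "R = (\<lambda>p q. \<Sum>(c, u, w)\<leftarrow>xs. product_term c u w p q)"
    and "S = (\<lambda>p q. \<Sum>(c, u, w)\<leftarrow>ys. product_term c u w p q)"
    using assms unfolding sep_cone_def by blast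
  then show ?thesis
    unfolding sep_cone_def by (intro exI[of _ "xs @ ys"]) auto
qed

lemma sep_cone_sum:
  fixes R :: "nat \<Rightarrow> vert \<Rightarrow> vert \<Rightarrow> complex"
  shows "(\<And>k. k < n \<Longrightarrow> sep_cone (R k)) \<Longrightarrow> sep_cone (\<lambda>p q. \<Sum>k<n. R k p q)"
  by (induction n) (simp_all add: sep_cone_zero sep_cone_add)

lemma sep_cone_scale:
  assumes "sep_cone R" and "s \<ge> 0"
  shows "sep_cone (\<lambda>p q. of_real s * R p q)"
proof -
  obtain xs where xs: "\<forall>(c, u, w)\<in>set xs. c \<ge> 0"
    and R: "R = (\<lambda>p q. \<Sum>(c, u, w)\<leftarrow>xs. product_term c u w p q)"
    using assms unfolding sep_cone_def by blast
  have "(\<lambda>p q. of_real s * R p q)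
      = (\<lambda>p q. \<Sum>(c, u, w)\<leftarrow>map (\<lambda>(c, u, w). (s * c, u, w)) xs. product_term c u w p q)"
    unfolding R by (simp add: sum_list_const_mult[symmetric] o_def case_prod_beta
        product_term_def mult.assoc)
  moreover have "\<forall>(c, u, w)\<in>set (map (\<lambda>(c, u, w). (s * c, u, w)) xs). c \<ge> 0"
    using xs \<open>s \<ge> 0\<close> by auto
  ultimately show ?thesis
    unfolding sep_cone_def by blast
qed

lemma sep_cone_product_vector:
  assumes "\<And>p. V p = u (fst p) * w (snd p)"
  shows "sep_cone (\<lambda>p q. V p * cnj (V q))"
proof -
  have "(\<lambda>p q. V p * cnj (V q)) = product_term 1 u w"
    unfolding product_term_def assms by simp
  then show ?thesis
    using sep_cone_product_term[of 1] by simp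
qed

definition sqnorm :: "nat \<Rightarrow> (nat \<Rightarrow> complex) \<Rightarrow> real" where
  "sqnorm n u = (\<Sum>i<n. (cmod (u i))\<^sup>2)"

text \<open>The zero vector is sent to the projector onto the first basis vector, so that
  pure_state n u is a density matrix for every u.\<close>
definition pure_state :: "nat \<Rightarrow> (nat \<Rightarrow> complex) \<Rightarrow> nat \<Rightarrow> nat \<Rightarrow> complex" where
  "pure_state n u i k =
    (if sqnorm n u = 0 then of_bool (i = 0 \<and> k = 0) else u i * cnj (u k) / of_real (sqnorm n u))"

lemma sqnorm_eq_0_iff: "sqnorm n u = 0 \<longleftrightarrow> (\<forall>i<n. u i = 0)"
  unfolding sqnorm_def by (subst sum_nonneg_eq_0_iff) auto

lemma density_matrix_rank_one:
  assumes "sqnorm n u > 0"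
  shows "density_matrix n (\<lambda>i k. u i * cnj (u k) / of_real (sqnorm n u))"
  unfolding density_matrix_def
proof (intro conjI allI impI)
  fix x :: "nat \<Rightarrow> complex"
  define s where "s = (\<Sum>i<n. cnj (x i) * u i)"
  have "(\<Sum>i<n. \<Sum>j<n. cnj (x i) * (u i * cnj (u j) / of_real (sqnorm n u)) * x j)
      = (\<Sum>i<n. \<Sum>j<n. (cnj (x i) * u i) * (cnj (u j) * x j)) / of_real (sqnorm n u)"
    by (simp add: sum_divide_distrib mult_ac)
  also have "\<dots> = s * cnj s / of_real (sqnorm n u)"
    unfolding s_def sum_product[symmetric] by (simp add: mult_ac)
  also have "\<dots> = of_real ((cmod s)\<^sup>2 / sqnorm n u)"
    using complex_norm_square[of s] by (simp del: of_real_power)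
  finally have q: "(\<Sum>i<n. \<Sum>j<n. cnj (x i) * (u i * cnj (u j) / of_real (sqnorm n u)) * x j)
      = of_real ((cmod s)\<^sup>2 / sqnorm n u)" .
  show "Im (\<Sum>i<n. \<Sum>j<n. cnj (x i) * (u i * cnj (u j) / of_real (sqnorm n u)) * x j) = 0"
    unfolding q by simp
  show "Re (\<Sum>i<n. \<Sum>j<n. cnj (x i) * (u i * cnj (u j) / of_real (sqnorm n u)) * x j) \<ge> 0"
    unfolding q using assms by simp
next
  have "cnj (u i) * u i = of_real ((cmod (u i))\<^sup>2)" for i
    by (subst complex_norm_square) (simp add: mult.commute)
  then have "(\<Sum>i<n. cnj (u i) * u i) = of_real (sqnorm n u)"
    unfolding sqnorm_def of_real_sum by simp
  then show "(\<Sum>i<n. u i * cnj (u i) / of_real (sqnorm n u)) = 1"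
    using assms by (simp add: sum_divide_distrib[symmetric] mult.commute)
qed (simp add: mult.commute)

lemma density_matrix_pure_state:
  assumes "n > 0"
  shows "density_matrix n (pure_state n u)"
proof (cases "sqnorm n u = 0")
  case True
  define e :: "nat \<Rightarrow> complex" where "e i = of_bool (i = 0)" for i
  have "(cmod (e i))\<^sup>2 = (if i = 0 then 1 else 0)" for i
    unfolding e_def by simp
  then have "sqnorm n e = 1"
    using assms unfolding sqnorm_def by simp
  moreover have "pure_state n u = (\<lambda>i k. e i * cnj (e k) / of_real (sqnorm n e))"
    using True \<open>sqnorm n e = 1\<close> unfolding pure_state_def e_def by (intro ext) simp
  ultimately show ?thesis
    using density_matrix_rank_one[of n e] by simp
next
  case False
  then have "pure_state n u = (\<lambda>i k. u i * cnj (u k) / of_real (sqnorm n u))"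
    unfolding pure_state_def by (intro ext) simp
  moreover have "sqnorm n u > 0"
    using False unfolding sqnorm_def by (simp add: order_neq_le_trans sum_nonneg)
  ultimately show ?thesis
    using density_matrix_rank_one by simp
qed

lemma product_term_pure_states:
  assumes "i < a" "k < a" "j < b" "l < b"
  shows "product_term c u w (i, j) (k, l)
    = of_real (c * sqnorm a u * sqnorm b w) * pure_state a u i k * pure_state b w j l"
proof (cases "sqnorm a u = 0 \<or> sqnorm b w = 0")
  case True
  then have "u i = 0 \<or> w j = 0"
    using assms sqnorm_eq_0_iff by blast
  then show ?thesis
    using True unfolding product_term_def by auto
next
  case False
  then show ?thesis
    unfolding product_term_def pure_state_def by (simp add: field_simps)
qed

text \<open>Normalising each product term to a product of density matrices puts the weight
  c |u|^2 |w|^2 on it; the weights sum to the trace.\<close>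
lemma separable_if_sep_cone:
  assumes "sep_cone R" and "a > 0" "b > 0" and trace: "(\<Sum>v\<in>grid a b. R v v) = 1"
  shows "separable a b R"
proof -
  obtain xs where xs: "\<forall>(c, u, w)\<in>set xs. c \<ge> 0"
    and R: "R = (\<lambda>p q. \<Sum>(c, u, w)\<leftarrow>xs. product_term c u w p q)"
    using assms(1) unfolding sep_cone_def by blast
  define N where "N = length xs"
  define p where "p t = (case xs ! t of (c, u, w) \<Rightarrow> c * sqnorm a u * sqnorm b w)" for t
  define A where "A t = (case xs ! t of (c, u, w) \<Rightarrow> pure_state a u)" for t
  define B where "B t = (case xs ! t of (c, u, w) \<Rightarrow> pure_state b w)" for t
  have R_nth: "R v v' = (\<Sum>t<N. case xs ! t of (c, u, w) \<Rightarrow> product_term c u w v v')" for v v'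
    unfolding R N_def sum_list_sum_nth by (simp add: atLeast0LessThan)
  have dec: "R (i, j) (k, l) = (\<Sum>t<N. of_real (p t) * A t i k * B t j l)"
    if "i < a" "j < b" "k < a" "l < b" for i j k l
    unfolding R_nth p_def A_def B_def
    by (rule sum.cong[OF refl]) (simp add: product_term_pure_states[OF that(1,3,2,4)] split: prod.split)
  have sqnorm_nonneg: "sqnorm n u \<ge> 0" for n u
    unfolding sqnorm_def by (simp add: sum_nonneg)
  have p: "p t \<ge> 0" if "t < N" for t
  proof -
    obtain c u w where t: "xs ! t = (c, u, w)" by (cases "xs ! t") blast
    then have "c \<ge> 0"
      using xs nth_mem[of t xs] that unfolding N_def by fastforce
    then show ?thesis
      unfolding p_def t using sqnorm_nonneg by simp
  qed
  have dm: "density_matrix a (A t)" "density_matrix b (B t)" for t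
    unfolding A_def B_def using density_matrix_pure_state \<open>a > 0\<close> \<open>b > 0\<close>
    by (simp_all split: prod.split)
  have "1 = (\<Sum>i<a. \<Sum>j<b. \<Sum>t<N. of_real (p t) * A t i i * B t j j)"
    unfolding trace[symmetric] sum_grid[symmetric] using dec by simp
  also have "\<dots> = (\<Sum>t<N. of_real (p t) * (\<Sum>i<a. A t i i) * (\<Sum>j<b. B t j j))"
    by (rule sum_product_terms)
  also have "\<dots> = of_real (\<Sum>t<N. p t)"
  proof -
    have "(\<Sum>i<a. A t i i) = 1" "(\<Sum>j<b. B t j j) = 1" for t
      using dm[of t] unfolding density_matrix_def by blast+
    then show ?thesis by (simp add: of_real_sum)
  qed
  finally have "(\<Sum>t<N. p t) = 1"
    by (metis of_real_eq_1_iff)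
  then show ?thesis
    unfolding separable_def using p dm dec
    by (intro exI[of _ N] exI[of _ p] exI[of _ A] exI[of _ B]) simp
qed

lemma trace_rho:
  assumes "grid_graph a b E" and "E \<noteq> {}"
  shows "(\<Sum>v\<in>grid a b. rho E v v) = 1"
proof -
  have "(\<Sum>v\<in>grid a b. rho E v v) = of_nat (\<Sum>v\<in>grid a b. card (neighbours E v)) / of_nat (2 * card E)"
    unfolding rho_def sum_divide_distrib[symmetric]
    by (simp add: laplacian_neighbours grid_graph_loopless[OF assms(1)])
  then show ?thesis
    using handshake[OF assms(1)] grid_graph_finite[OF assms(1)] assms(2) by simp
qed

lemma sep_cone_rho: "sep_cone (laplacian E) \<Longrightarrow> sep_cone (rho E)"
  using sep_cone_scale[of "laplacian E" "1 / real (2 * card E)"]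
  unfolding rho_def by (simp add: field_simps)

lemma sep_cone_laplacian_diff:
  assumes "grid_graph a b E" and "Z \<subseteq> E"
    and "sep_cone (laplacian (E - Z))" and "sep_cone (laplacian Z)"
  shows "sep_cone (laplacian E)"
proof -
  have "laplacian E = (\<lambda>u v. laplacian (E - Z) u v + laplacian Z u v)"
    using laplacian_diff[OF assms(1,2)] by blast
  then show ?thesis
    using sep_cone_add[OF assms(3,4)] by simp
qed

lemma laplacian_single_edge:
  assumes "p0 \<noteq> q0"
  shows "laplacian {{p0, q0}} p q =
    (if p = p0 then 1 else if p = q0 then -1 else 0) * cnj (if q = p0 then 1 else if q = q0 then -1 else 0)"
proof -
  have l: "loopless {{p0, q0}}"
    unfolding loopless_def using assms by blast
  have "neighbours {{p0, q0}} p = (if p = p0 then {q0} else if p = q0 then {p0} else {})"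
    using assms unfolding neighbours_def by (auto simp: doubleton_eq_iff)
  then show ?thesis
    unfolding laplacian_neighbours[OF l] using assms by (auto simp: doubleton_eq_iff)
qed

text \<open>An edge inside a row or a column is a difference of two basis vectors of one factor.\<close>
lemma sep_cone_laplacian_straight_edge:
  assumes "p0 \<noteq> q0" and "fst p0 = fst q0 \<or> snd p0 = snd q0"
  shows "sep_cone (laplacian {{p0, q0}})"
proof -
  define V where "V p = (if p = p0 then 1 else if p = q0 then -1 else (0::complex))" for p
  obtain i j k l where pq: "p0 = (i, j)" "q0 = (k, l)" by fastforce
  have "sep_cone (\<lambda>p q. V p * cnj (V q))"
  proof (cases "i = k")
    case True
    then show ?thesis
      using assms(1) unfolding pq
      by (intro sep_cone_product_vector[where u = "\<lambda>x. of_bool (x = i)"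
            and w = "\<lambda>y. if y = j then 1 else if y = l then -1 else 0"]) (auto simp: V_def pq)
  next
    case False
    then have "j = l" using assms(2) pq by simp
    then show ?thesis
      using False
      by (intro sep_cone_product_vector[where u = "\<lambda>x. if x = i then 1 else if x = k then -1 else 0"
            and w = "\<lambda>y. of_bool (y = j)"]) (auto simp: V_def pq)
  qed
  moreover have "laplacian {{p0, q0}} = (\<lambda>p q. V p * cnj (V q))"
    unfolding V_def by (intro ext) (rule laplacian_single_edge[OF assms(1)])
  ultimately show ?thesis
    by simp
qed

lemma pt_neighbours_straight_edge:
  assumes "p0 \<noteq> q0" and "fst p0 = fst q0 \<or> snd p0 = snd q0"
  shows "pt_neighbours {{p0, q0}} v = neighbours {{p0, q0}} v"
proof -
  obtain i j k l where pq: "p0 = (i, j)" "q0 = (k, l)" by fastforce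
  obtain x y where v: "v = (x, y)" by fastforce
  show ?thesis
  proof (cases "i = k")
    case True
    then show ?thesis unfolding pq v neighbours_def pt_neighbours_def using assms(1) pq
      by (auto simp: doubleton_eq_iff)
  next
    case False
    then have "j = l" using assms(2) pq by simp
    then show ?thesis unfolding pq v neighbours_def pt_neighbours_def using assms(1) pq False
      by (auto simp: doubleton_eq_iff)
  qed
qed

section \<open>Simple cycles in balanced digraphs\<close>

definition simple_cycle :: "('a \<times> 'a) set \<Rightarrow> nat \<Rightarrow> (nat \<Rightarrow> 'a) \<Rightarrow> bool" where
  "simple_cycle A L c \<longleftrightarrow>
    L > 0 \<and> (\<forall>n. c n = c (n mod L)) \<and> inj_on c {..<L} \<and> (\<forall>s. (c s, c (Suc s)) \<in> A)"

lemma infinite_walk_has_simple_cycle: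
  assumes "finite A" and walk: "\<And>n. (w n, w (Suc n)) \<in> A"
  shows "\<exists>L c. simple_cycle A L c"
proof -
  have "\<not> inj_on w {..card (fst ` A)}"
  proof
    assume "inj_on w {..card (fst ` A)}"
    moreover have "w ` {..card (fst ` A)} \<subseteq> fst ` A"
      using walk by force
    ultimately have "card {..card (fst ` A)} \<le> card (fst ` A)"
      using \<open>finite A\<close> by (intro card_inj_on_le) simp_all
    then show False
      by simp
  qed
  then obtain n m where "n < m" "w n = w m"
    unfolding inj_on_def by (metis linorder_neqE_nat)
  define m0 where "m0 = (LEAST m. \<exists>n<m. w n = w m)"
  have "\<exists>n<m0. w n = w m0"
    unfolding m0_def by (rule LeastI[of _ m]) (use \<open>n < m\<close> \<open>w n = w m\<close> in blast)
  then obtain n0 where n0: "n0 < m0" "w n0 = w m0"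
    by blast
  have distinct: "w p \<noteq> w q" if "p < q" "q < m0" for p q
  proof
    assume "w p = w q"
    then have "m0 \<le> q"
      unfolding m0_def using \<open>p < q\<close> by (intro Least_le) blast
    then show False
      using \<open>q < m0\<close> by simp
  qed
  define L where "L = m0 - n0"
  define c where "c s = w (n0 + s mod L)" for s
  have "L > 0"
    unfolding L_def using n0 by simp
  have "inj_on c {..<L}"
  proof (rule inj_onI)
    fix s s' assume "s \<in> {..<L}" "s' \<in> {..<L}" "c s = c s'"
    then have "w (n0 + s) = w (n0 + s')" "n0 + s < m0" "n0 + s' < m0"
      unfolding c_def L_def by auto
    then show "s = s'"
      using distinct[of "n0 + s" "n0 + s'"] distinct[of "n0 + s'" "n0 + s"]
      by (metis add_less_cancel_left linorder_neqE_nat)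
  qed
  moreover have "(c s, c (Suc s)) \<in> A" for s
  proof -
    have "c (Suc s) = w (Suc (n0 + s mod L))"
    proof (cases "Suc (s mod L) = L")
      case True
      then have "Suc s mod L = 0"
        by (metis mod_Suc)
      moreover have "Suc (n0 + s mod L) = m0"
        using True n0 unfolding L_def by simp
      ultimately show ?thesis
        using n0 unfolding c_def by simp
    next
      case False
      then show ?thesis
        unfolding c_def by (simp add: mod_Suc)
    qed
    then show ?thesis
      using walk unfolding c_def by simp
  qed
  moreover have "c n = c (n mod L)" for n
    unfolding c_def by simp
  ultimately show ?thesis
    unfolding simple_cycle_def using \<open>L > 0\<close> by blast
qed

lemma balanced_digraph_has_simple_cycle:
  assumes "finite A" and "A \<noteq> {}"
    and balanced: "\<And>j. card {l. (j, l) \<in> A} = card {l. (l, j) \<in> A}"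
  shows "\<exists>L c. simple_cycle A L c"
proof -
  have out: "\<exists>l. (j, l) \<in> A" if "(x, j) \<in> A" for x j
  proof -
    have "{l. (l, j) \<in> A} \<subseteq> fst ` A"
      by force
    then have "finite {l. (l, j) \<in> A}"
      using \<open>finite A\<close> finite_subset by blast
    then have "card {l. (l, j) \<in> A} > 0"
      using that by (auto simp: card_gt_0_iff)
    then show ?thesis
      using balanced by (metis card.empty empty_Collect_eq less_irrefl)
  qed
  obtain j0 j1 where "(j0, j1) \<in> A"
    using \<open>A \<noteq> {}\<close> by fastforce
  define w where "w = rec_nat j0 (\<lambda>_ x. SOME l. (x, l) \<in> A)"
  have w0: "w 0 = j0" and wSuc: "w (Suc n) = (SOME l. (w n, l) \<in> A)" for n
    unfolding w_def by simp_all
  have "(w n, w (Suc n)) \<in> A" for n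
  proof (induction n)
    case 0
    then show ?case
      unfolding wSuc w0 using \<open>(j0, j1) \<in> A\<close> by (rule someI)
  next
    case (Suc n)
    then obtain l where "(w (Suc n), l) \<in> A"
      using out by blast
    then show ?case
      unfolding wSuc[of "Suc n"] by (rule someI)
  qed
  then show ?thesis
    using infinite_walk_has_simple_cycle[OF \<open>finite A\<close>] by blast
qed

section \<open>The Laplacian of a cycle between adjacent rows\<close>

definition zeta :: "nat \<Rightarrow> nat \<Rightarrow> int \<Rightarrow> complex" where
  "zeta L k d = cis (2 * pi * real k * of_int d / real L)"

lemma zeta_mult: "zeta L k d * zeta L k d' = zeta L k (d + d')"
  unfolding zeta_def cis_mult by (simp add: add_divide_distrib distrib_left)

lemma cnj_zeta: "cnj (zeta L k d) = zeta L k (- d)"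
  unfolding zeta_def by (simp add: cis_cnj)

lemma sum_zeta:
  assumes "L > 0"
  shows "(\<Sum>k<L. zeta L k d) = (if int L dvd d then of_nat L else 0)"
proof -
  define z where "z = cis (2 * pi * of_int d / real L)"
  have zk: "zeta L k d = z ^ k" for k
    unfolding z_def zeta_def DeMoivre by (simp add: mult_ac)
  have "z ^ L = cis (real L * (2 * pi * of_int d / real L))"
    unfolding z_def DeMoivre ..
  then have zL: "z ^ L = 1"
    using assms by simp
  show ?thesis
  proof (cases "int L dvd d")
    case True
    then obtain q where "d = int L * q"
      by (auto elim: dvdE)
    then have "2 * pi * of_int d / real L = 2 * pi * of_int q"
      using assms by simp
    then have "z = 1"
      unfolding z_def using cis_multiple_2pi[of "of_int q"] by simp
    then show ?thesis
      using True by (simp add: zk)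
  next
    case False
    have "z \<noteq> 1"
    proof
      assume "z = 1"
      then have "cos (2 * pi * of_int d / real L) = 1"
        unfolding z_def by (metis complex.sel(1) cis.sel(1) one_complex.sel(1))
      then obtain n :: int where "2 * pi * of_int d / real L = n * 2 * pi"
        by (auto simp: cos_one_2pi_int)
      then have "of_int d = real L * of_int n"
        using assms by (simp add: field_simps)
      then have "d = int L * n"
        by (metis of_int_eq_iff of_int_mult of_int_of_nat_eq)
      then show False
        using False by simp
    qed
    then show ?thesis
      using False by (simp add: zk geometric_sum zL)
  qed
qed

text \<open>Give the vertex (x, y) of the support the key pos y - offset x, pos y being the position
  of column y on the cycle. The edge {(i, c s), (i + 1, c (s + 1))} joins the two vertices of key
  s mod L, so the edges form the perfect matching of the support by key.\<close>
locale row_cycle =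
  fixes i L :: nat and c :: "nat \<Rightarrow> nat"
  assumes L_pos: "L > 0" and periodic: "\<And>n. c n = c (n mod L)" and inj: "inj_on c {..<L}"
begin

definition columns :: "nat set" where
  "columns = c ` {..<L}"

definition pos :: "nat \<Rightarrow> nat" where
  "pos y = inv_into {..<L} c y"

definition edges :: "vert set set" where
  "edges = (\<lambda>s. {(i, c s), (Suc i, c (Suc s))}) ` {..<L}"

definition support :: "vert set" where
  "support = {i, Suc i} \<times> columns"

definition offset :: "nat \<Rightarrow> int" where
  "offset x = (if x = i then 0 else 1)"

definition key :: "vert \<Rightarrow> int" where
  "key v = int (pos (snd v)) - offset (fst v)"

definition sign :: "nat \<Rightarrow> complex" where
  "sign x = (if x = i then 1 else -1)"

lemma c_in_columns: "c n \<in> columns"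
  unfolding columns_def using periodic[of n] L_pos by (metis image_eqI lessThan_iff mod_less_divisor)

lemma pos_c: "pos (c n) = n mod L"
  unfolding pos_def using inj L_pos by (subst periodic) (simp add: inv_into_f_f)

lemma pos_less: "y \<in> columns \<Longrightarrow> pos y < L"
  unfolding columns_def pos_def by (metis inv_into_into lessThan_iff)

lemma c_pos: "y \<in> columns \<Longrightarrow> c (pos y) = y"
  unfolding columns_def pos_def by (auto intro: f_inv_into_f)

lemma columns_eq_if_dvd:
  assumes "y \<in> columns" "y' \<in> columns" and "int L dvd int (pos y) - int (pos y')"
  shows "y = y'"
proof -
  have "int (pos y) mod int L = int (pos y') mod int L"
    using assms(3) by (simp add: mod_eq_dvd_iff)
  then have "pos y = pos y'"
    using pos_less[OF assms(1)] pos_less[OF assms(2)] by simp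
  then show ?thesis
    using c_pos assms(1,2) by metis
qed

lemma card_columns_dvd: "card {y \<in> columns. int L dvd d - int (pos y)} = 1"
proof -
  define y0 where "y0 = c (nat (d mod int L))"
  have "int (pos y0) = d mod int L"
    unfolding y0_def pos_c using L_pos by (simp add: nat_mod_distrib[symmetric] zmod_int)
  then have y0: "y0 \<in> columns" "int L dvd d - int (pos y0)"
    unfolding y0_def by (simp_all add: c_in_columns mod_eq_dvd_iff[symmetric])
  have "{y \<in> columns. int L dvd d - int (pos y)} = {y0}"
  proof (intro equalityI subsetI)
    fix y assume "y \<in> {y \<in> columns. int L dvd d - int (pos y)}"
    then have "y \<in> columns" "int L dvd int (pos y) - int (pos y0)"
      using y0(2) dvd_diff[of "int L" "d - int (pos y0)" "d - int (pos y)"] by auto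
    then show "y \<in> {y0}"
      using columns_eq_if_dvd y0(1) by blast
  qed (use y0 in simp)
  then show ?thesis
    by simp
qed

lemma dvd_key_edge: "int L dvd key (i, c s) - key (Suc i, c (Suc s))"
proof -
  have "key (i, c s) - key (Suc i, c (Suc s)) = (int s mod int L + 1) - (int s + 1) mod int L"
    by (simp add: key_def offset_def pos_c zmod_int add.commute)
  moreover have "(int s mod int L + 1) mod int L = (int s + 1) mod int L mod int L"
    by (simp add: mod_add_left_eq)
  ultimately show ?thesis
    by (simp only: mod_eq_dvd_iff)
qed

lemma edge_if_dvd_key:
  assumes "y \<in> columns" "y' \<in> columns" and "int L dvd key (i, y) - key (Suc i, y')"
  shows "{(i, y), (Suc i, y')} \<in> edges"
proof -
  define s where "s = pos y"
  have "int L dvd key (i, y) - key (Suc i, c (Suc s))"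
    using dvd_key_edge[of s] c_pos[OF assms(1)] unfolding s_def by simp
  then have "int L dvd int (pos y') - int (pos (c (Suc s)))"
    using assms(3) dvd_diff[of "int L" "key (i, y) - key (Suc i, c (Suc s))" "key (i, y) - key (Suc i, y')"]
    by (simp add: key_def offset_def)
  then have "y' = c (Suc s)"
    using columns_eq_if_dvd[OF assms(2) c_in_columns] by blast
  moreover have "y = c s" "s < L"
    unfolding s_def using c_pos pos_less assms(1) by auto
  ultimately show ?thesis
    unfolding edges_def by blast
qed

lemma edges_iff:
  "{p, q} \<in> edges \<longleftrightarrow> p \<in> support \<and> q \<in> support \<and> fst p \<noteq> fst q \<and> int L dvd key p - key q"
proof
  assume "{p, q} \<in> edges"
  then obtain s where s: "{p, q} = {(i, c s), (Suc i, c (Suc s))}"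
    unfolding edges_def by blast
  have "int L dvd key (Suc i, c (Suc s)) - key (i, c s)"
    using dvd_key_edge[of s] by (simp add: dvd_diff_commute)
  then show "p \<in> support \<and> q \<in> support \<and> fst p \<noteq> fst q \<and> int L dvd key p - key q"
    using s dvd_key_edge[of s] c_in_columns unfolding support_def by (auto simp: doubleton_eq_iff)
next
  assume *: "p \<in> support \<and> q \<in> support \<and> fst p \<noteq> fst q \<and> int L dvd key p - key q"
  then consider "fst p = i" "fst q = Suc i" | "fst p = Suc i" "fst q = i"
    unfolding support_def by auto
  then show "{p, q} \<in> edges"
  proof cases
    case 1
    then show ?thesis
      using * edge_if_dvd_key[of "snd p" "snd q"] unfolding support_def by (cases p, cases q) auto
  next
    case 2
    then have "{q, p} \<in> edges"
      using * edge_if_dvd_key[of "snd q" "snd p"] unfolding support_def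
      by (cases p, cases q) (auto simp: dvd_diff_commute)
    then show ?thesis
      by (simp add: insert_commute)
  qed
qed

lemma loopless_edges: "loopless edges"
  unfolding loopless_def
proof
  fix e assume "e \<in> edges"
  then obtain s where "e = {(i, c s), (Suc i, c (Suc s))}"
    unfolding edges_def by blast
  moreover have "(i, c s) \<noteq> (Suc i, c (Suc s))"
    by simp
  ultimately show "\<exists>u v. u \<noteq> v \<and> e = {u, v}"
    by blast
qed

lemma card_other_row:
  assumes "x \<in> {i, Suc i}"
  shows "card {(k, l). k \<in> {i, Suc i} \<and> k \<noteq> x \<and> l \<in> columns \<and> int L dvd d k - int (pos l)} = 1"
proof -
  define x' where "x' = (if x = i then Suc i else i)"
  have "{(k, l). k \<in> {i, Suc i} \<and> k \<noteq> x \<and> l \<in> columns \<and> int L dvd d k - int (pos l)}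
      = Pair x' ` {l \<in> columns. int L dvd d x' - int (pos l)}"
    using assms unfolding x'_def by auto
  then show ?thesis
    by (simp add: card_image inj_on_def card_columns_dvd)
qed

lemma card_neighbours_edges: "card (neighbours edges v) = (if v \<in> support then 1 else 0)"
proof -
  obtain x y where v: "v = (x, y)" by fastforce
  have "neighbours edges (x, y) = {(k, l). (x, y) \<in> support \<and> k \<in> {i, Suc i} \<and> k \<noteq> x \<and>
      l \<in> columns \<and> int L dvd (key (x, y) + offset k) - int (pos l)}"
  proof (rule set_eqI)
    fix w :: vert
    obtain k l where w: "w = (k, l)" by fastforce
    have key_diff: "key (x, y) - key (k, l) = (key (x, y) + offset k) - int (pos l)"
      by (simp add: key_def)
    show "w \<in> neighbours edges (x, y) \<longleftrightarrow> w \<in> {(k, l). (x, y) \<in> support \<and> k \<in> {i, Suc i} \<and>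
        k \<noteq> x \<and> l \<in> columns \<and> int L dvd (key (x, y) + offset k) - int (pos l)}"
      unfolding w neighbours_def mem_Collect_eq edges_iff prod.case fst_conv snd_conv key_diff
      by (auto simp: support_def)
  qed
  then show ?thesis
    using card_other_row unfolding v support_def by auto
qed

lemma card_pt_neighbours_edges: "card (pt_neighbours edges v) = (if v \<in> support then 1 else 0)"
proof -
  obtain x y where v: "v = (x, y)" by fastforce
  have "pt_neighbours edges (x, y) = {(k, l). (x, y) \<in> support \<and> k \<in> {i, Suc i} \<and> k \<noteq> x \<and>
      l \<in> columns \<and> int L dvd (int (pos y) + offset x - offset k) - int (pos l)}"
  proof (rule set_eqI)
    fix w :: vert
    obtain k l where w: "w = (k, l)" by fastforce
    have key_diff: "key (x, l) - key (k, y) = - ((int (pos y) + offset x - offset k) - int (pos l))"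
      by (simp add: key_def)
    show "w \<in> pt_neighbours edges (x, y) \<longleftrightarrow> w \<in> {(k, l). (x, y) \<in> support \<and> k \<in> {i, Suc i} \<and>
        k \<noteq> x \<and> l \<in> columns \<and> int L dvd (int (pos y) + offset x - offset k) - int (pos l)}"
      unfolding w pt_neighbours_def mem_Collect_eq edges_iff prod.case fst_conv snd_conv key_diff
        dvd_minus_iff
      by (auto simp: support_def)
  qed
  then show ?thesis
    using card_other_row unfolding v support_def by auto
qed

lemma pt_neighbours_edges_balanced: "card (neighbours edges v) = card (pt_neighbours edges v)"
  unfolding card_neighbours_edges card_pt_neighbours_edges ..

lemma laplacian_edges:
  "laplacian edges p q =
    (if p \<in> support \<and> q \<in> support then sign (fst p) * sign (fst q) * of_bool (int L dvd key p - key q)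
     else 0)"
proof (cases "p = q")
  case True
  then show ?thesis
    by (simp add: laplacian_neighbours[OF loopless_edges] card_neighbours_edges sign_def)
next
  case False
  have "\<not> int L dvd key p - key q" if "p \<in> support" "q \<in> support" "fst p = fst q"
  proof
    assume "int L dvd key p - key q"
    then have "snd p = snd q"
      using that columns_eq_if_dvd unfolding support_def key_def by auto
    then show False
      using False \<open>fst p = fst q\<close> by (simp add: prod_eq_iff)
  qed
  moreover have "sign (fst p) * sign (fst q) = -1" if "p \<in> support" "q \<in> support" "fst p \<noteq> fst q"
    using that unfolding support_def sign_def by auto
  ultimately show ?thesis
    using False by (auto simp: laplacian_neighbours[OF loopless_edges] edges_iff)
qed

definition row_vec :: "nat \<Rightarrow> nat \<Rightarrow> complex" where
  "row_vec k x = (if x = i then 1 else if x = Suc i then - zeta L k 1 else 0)"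

definition col_vec :: "nat \<Rightarrow> nat \<Rightarrow> complex" where
  "col_vec k y = (if y \<in> columns then zeta L k (- int (pos y)) else 0)"

lemma row_vec_col_vec:
  "row_vec k (fst v) * col_vec k (snd v) = (if v \<in> support then sign (fst v) * zeta L k (- key v) else 0)"
  by (cases v) (auto simp: row_vec_def col_vec_def support_def sign_def key_def offset_def zeta_mult)

text \<open>Discrete Fourier transform along the cycle: averaging over the L-th roots of unity
  the rank-one product operators of the vectors row_vec k \<otimes> col_vec k leaves exactly the
  pairs of support vertices with equal key.\<close>
lemma laplacian_edges_fourier:
  "laplacian edges p q = (\<Sum>k<L. product_term (1 / real L) (row_vec k) (col_vec k) p q)"
proof (cases "p \<in> support \<and> q \<in> support")
  case True
  have "(\<Sum>k<L. product_term (1 / real L) (row_vec k) (col_vec k) p q)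
      = (\<Sum>k<L. sign (fst p) * sign (fst q) * (of_real (1 / real L) * zeta L k (key q - key p)))"
    unfolding product_term_def row_vec_col_vec using True
    by (intro sum.cong refl) (auto simp: cnj_zeta zeta_mult sign_def)
  also have "\<dots> = sign (fst p) * sign (fst q) * (of_real (1 / real L) * (\<Sum>k<L. zeta L k (key q - key p)))"
    by (simp add: sum_distrib_left)
  also have "of_real (1 / real L) * (\<Sum>k<L. zeta L k (key q - key p)) = of_bool (int L dvd key p - key q)"
    using L_pos by (simp add: sum_zeta dvd_diff_commute)
  finally show ?thesis
    unfolding laplacian_edges using True by simp
next
  case False
  then show ?thesis
    unfolding laplacian_edges product_term_def row_vec_col_vec by auto
qed

lemma sep_cone_laplacian_edges: "sep_cone (laplacian edges)"
proof -
  have "sep_cone (\<lambda>p q. \<Sum>k<L. product_term (1 / real L) (row_vec k) (col_vec k) p q)"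
    by (intro sep_cone_sum sep_cone_product_term) simp
  then show ?thesis
    using laplacian_edges_fourier by presburger
qed

lemma edges_subset:
  assumes "simple_cycle {(j, l). {(i, j), (Suc i, l)} \<in> E} L c"
  shows "edges \<subseteq> E"
  using assms unfolding simple_cycle_def edges_def by auto

end

lemma row_cycle_if_simple_cycle: "simple_cycle A L c \<Longrightarrow> row_cycle L c"
  unfolding simple_cycle_def row_cycle_def by blast

section \<open>Sufficiency for row stratified graphs\<close>

lemma row_stratified_subset: "row_stratified E \<Longrightarrow> F \<subseteq> E \<Longrightarrow> row_stratified F"
  unfolding row_stratified_def by blast

lemma neighbours_in_next_row:
  assumes "\<And>j k l. {(i, j), (k, l)} \<in> E \<Longrightarrow> k = Suc i"
  shows "neighbours E (i, j) = Pair (Suc i) ` {l. {(i, j), (Suc i, l)} \<in> E}"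
    and "pt_neighbours E (i, j) = Pair (Suc i) ` {l. {(i, l), (Suc i, j)} \<in> E}"
  using assms unfolding neighbours_def pt_neighbours_def by fastforce+

lemma next_row_digraph_balanced:
  assumes g: "grid_graph a b E" and dc: "degree_criterion a b E"
    and next_row: "\<And>j k l. {(i, j), (k, l)} \<in> E \<Longrightarrow> k = Suc i"
  shows "card {l. {(i, j), (Suc i, l)} \<in> E} = card {l. {(i, l), (Suc i, j)} \<in> E}"
proof (cases "(i, j) \<in> grid a b")
  case True
  then have "card (neighbours E (i, j)) = card (pt_neighbours E (i, j))"
    using dc unfolding degree_criterion_iff[OF g] by blast
  moreover have "card (neighbours E (i, j)) = card {l. {(i, j), (Suc i, l)} \<in> E}"
    and "card (pt_neighbours E (i, j)) = card {l. {(i, l), (Suc i, j)} \<in> E}"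
    by (simp_all add: neighbours_in_next_row[OF next_row] card_image inj_on_def)
  ultimately show ?thesis
    by simp
next
  case False
  have "(i, j) \<in> grid a b" if "{(i, j), (Suc i, l)} \<in> E" for l
    using edge_in_grid(1)[OF g that] .
  moreover have "(i, j) \<in> grid a b" if "{(i, l), (Suc i, j)} \<in> E" for l
    using edge_in_grid[OF g that] unfolding grid_def by auto
  ultimately have "{l. {(i, j), (Suc i, l)} \<in> E} = {}" "{l. {(i, l), (Suc i, j)} \<in> E} = {}"
    using False by blast+
  then show ?thesis
    by simp
qed

text \<open>If all edges are diagonal, the edges between the lowest row i met by an edge and row i + 1
  form a digraph on the columns whose out- and in-degrees at j are the degrees of (i, j) in G and
  in its partial transpose; by the degree criterion it is balanced, hence contains a cycle.\<close>
lemma lowest_row_simple_cycle: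
  assumes g: "grid_graph a b E" and "row_stratified E" and dc: "degree_criterion a b E"
    and "E \<noteq> {}" and diagonal: "\<And>x y x' y'. {(x, y), (x', y')} \<in> E \<Longrightarrow> x \<noteq> x' \<and> y \<noteq> y'"
  obtains i L c where "simple_cycle {(j, l). {(i, j), (Suc i, l)} \<in> E} L c"
proof -
  have adjacent: "x' = Suc x \<or> x = Suc x'" if "{(x, y), (x', y')} \<in> E" for x y x' y'
    using \<open>row_stratified E\<close> diagonal[OF that] that unfolding row_stratified_def by fastforce
  define P where "P x \<longleftrightarrow> (\<exists>j l. {(x, j), (Suc x, l)} \<in> E)" for x
  obtain e where "e \<in> E"
    using \<open>E \<noteq> {}\<close> by blast
  then obtain x y x' y' where e: "{(x, y), (x', y')} \<in> E"
    using g unfolding grid_graph_def by (metis prod.collapse)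
  then have "P x \<or> P x'"
    using adjacent[OF e] unfolding P_def by (metis insert_commute)
  then have "\<exists>x. P x" by blast
  define i where "i = (LEAST x. P x)"
  have "P i"
    unfolding i_def using \<open>\<exists>x. P x\<close> by (rule LeastI_ex)
  have next_row: "k = Suc i" if "{(i, j), (k, l)} \<in> E" for j k l
  proof (rule ccontr)
    assume "k \<noteq> Suc i"
    then have "i = Suc k"
      using adjacent[OF that] by simp
    moreover have "P k"
      using that \<open>i = Suc k\<close> unfolding P_def by (metis insert_commute)
    ultimately show False
      using not_less_Least[of k P] unfolding i_def by simp
  qed
  define A where "A = {(j, l). {(i, j), (Suc i, l)} \<in> E}"
  have A_grid: "j < b \<and> l < b" if "(j, l) \<in> A" for j l
    using that edge_in_grid[OF g] unfolding A_def grid_def by auto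
  have "finite A"
    using A_grid by (intro finite_subset[of A "{..<b} \<times> {..<b}"]) auto
  moreover have "A \<noteq> {}"
    using \<open>P i\<close> unfolding P_def A_def by blast
  moreover have "card {l. (j, l) \<in> A} = card {l. (l, j) \<in> A}" for j
    using next_row_digraph_balanced[OF g dc next_row] unfolding A_def by simp
  ultimately show ?thesis
    using balanced_digraph_has_simple_cycle that unfolding A_def by blast
qed

lemma straight_edge_or_diagonal:
  assumes "loopless E"
  obtains p0 q0 where "{p0, q0} \<in> E" "p0 \<noteq> q0" "fst p0 = fst q0 \<or> snd p0 = snd q0"
  | "\<And>x y x' y'. {(x, y), (x', y')} \<in> E \<Longrightarrow> x \<noteq> x' \<and> y \<noteq> y'"
proof -
  have "x \<noteq> x' \<and> y \<noteq> y'"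
    if "{(x, y), (x', y')} \<in> E"
      and "\<not> (\<exists>p0 q0. {p0, q0} \<in> E \<and> p0 \<noteq> q0 \<and> (fst p0 = fst q0 \<or> snd p0 = snd q0))"
    for x y x' y'
  proof -
    have "(x, y) \<noteq> (x', y')"
      using assms that(1) unfolding loopless_def by (metis doubleton_eq_iff)
    then show ?thesis
      using that by fastforce
  qed
  then show ?thesis
    using that by blast
qed

lemma laplacian_empty: "laplacian {} = (\<lambda>p q. 0)"
  by (intro ext) (simp add: laplacian_def degree_def)

theorem sep_cone_laplacian_if_row_stratified:
  assumes "grid_graph a b E" and "row_stratified E" and "degree_criterion a b E"
  shows "sep_cone (laplacian E)"
  using assms
proof (induction "card E" arbitrary: E rule: less_induct)
  case less
  note g = \<open>grid_graph a b E\<close>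
  have remove: "sep_cone (laplacian E)"
    if "Z \<subseteq> E" "Z \<noteq> {}" and "\<And>v. card (neighbours Z v) = card (pt_neighbours Z v)"
      and "sep_cone (laplacian Z)" for Z
  proof -
    have "card (E - Z) < card E"
      using that(1,2) grid_graph_finite[OF g] by (intro psubset_card_mono) auto
    moreover have "grid_graph a b (E - Z)"
      using grid_graph_subset[OF g] by blast
    moreover have "row_stratified (E - Z)"
      using \<open>row_stratified E\<close> row_stratified_subset by blast
    moreover have "degree_criterion a b (E - Z)"
      using degree_criterion_diff[OF g that(1,3)] \<open>degree_criterion a b E\<close> by blast
    ultimately have "sep_cone (laplacian (E - Z))"
      using less.hyps by blast
    then show ?thesis
      using sep_cone_laplacian_diff[OF g that(1) _ that(4)] by blast
  qed
  show ?case
  proof (cases "E = {}")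
    case True
    then show ?thesis
      using sep_cone_zero by (simp add: laplacian_empty)
  next
    case False
    show ?thesis
      using grid_graph_loopless[OF g]
    proof (cases rule: straight_edge_or_diagonal)
      case (1 p0 q0)
      then show ?thesis
        using remove[of "{{p0, q0}}"] sep_cone_laplacian_straight_edge pt_neighbours_straight_edge
        by simp
    next
      case 2
      then obtain i L c where cycle: "simple_cycle {(j, l). {(i, j), (Suc i, l)} \<in> E} L c"
        using lowest_row_simple_cycle[OF g less.prems(2,3) False] by blast
      interpret row_cycle i L c
        using row_cycle_if_simple_cycle[OF cycle] .
      have "edges \<noteq> {}"
        using L_pos unfolding edges_def by auto
      then show ?thesis
        using remove[OF edges_subset[OF cycle]] pt_neighbours_edges_balanced sep_cone_laplacian_edges
        by blast
    qed
  qed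
qed

section \<open>Exchanging rows and columns\<close>

definition swap_graph :: "vert set set \<Rightarrow> vert set set" where
  "swap_graph E = (\<lambda>e. prod.swap ` e) ` E"

lemma swap_graph_iff: "{p, q} \<in> swap_graph E \<longleftrightarrow> {prod.swap p, prod.swap q} \<in> E"
proof -
  have swap_swap_image: "prod.swap ` prod.swap ` X = X" for X :: "vert set"
    by (simp add: image_image)
  have "X \<in> swap_graph E \<longleftrightarrow> prod.swap ` X \<in> E" for X :: "vert set"
  proof
    assume "X \<in> swap_graph E"
    then show "prod.swap ` X \<in> E"
      unfolding swap_graph_def using swap_swap_image by auto
  next
    assume "prod.swap ` X \<in> E"
    then have "prod.swap ` prod.swap ` X \<in> swap_graph E"
      unfolding swap_graph_def by blast
    then show "X \<in> swap_graph E"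
      by (simp only: swap_swap_image)
  qed
  then show ?thesis
    by simp
qed

lemma grid_graph_swap:
  assumes "grid_graph a b E"
  shows "grid_graph b a (swap_graph E)"
  unfolding grid_graph_def
proof
  fix e' assume "e' \<in> swap_graph E"
  then obtain e where e: "e \<in> E" "e' = prod.swap ` e"
    unfolding swap_graph_def by blast
  then obtain u v where uv: "u \<noteq> v" "u \<in> grid a b" "v \<in> grid a b" "e = {u, v}"
    using assms unfolding grid_graph_def by meson
  then have "prod.swap u \<noteq> prod.swap v" "prod.swap u \<in> grid b a" "prod.swap v \<in> grid b a"
    unfolding grid_def by (auto simp: prod.swap_def split: prod.splits)
  moreover have "e' = {prod.swap u, prod.swap v}"
    using e uv by simp
  ultimately show "\<exists>u v. u \<noteq> v \<and> u \<in> grid b a \<and> v \<in> grid b a \<and> e' = {u, v}"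
    by blast
qed

lemma row_stratified_swap:
  assumes "column_stratified E"
  shows "row_stratified (swap_graph E)"
  unfolding row_stratified_def
proof (intro allI impI)
  fix i j k l assume "{(i, j), (k, l)} \<in> swap_graph E \<and> i \<noteq> k \<and> j \<noteq> l"
  then show "\<bar>int i - int k\<bar> = 1"
    using assms unfolding column_stratified_def swap_graph_iff by auto
qed

lemma neighbours_swap:
  "neighbours (swap_graph E) (prod.swap v) = prod.swap ` neighbours E v"
proof (rule set_eqI)
  fix w :: vert
  have "w \<in> neighbours (swap_graph E) (prod.swap v) \<longleftrightarrow> prod.swap w \<in> neighbours E v"
    unfolding neighbours_def swap_graph_iff by (auto simp: prod.swap_def split: prod.splits)
  also have "\<dots> \<longleftrightarrow> w \<in> prod.swap ` neighbours E v"
    by (metis image_iff swap_swap)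
  finally show "w \<in> neighbours (swap_graph E) (prod.swap v) \<longleftrightarrow> w \<in> prod.swap ` neighbours E v" .
qed

lemma pt_neighbours_swap:
  "pt_neighbours (swap_graph E) (prod.swap v) = prod.swap ` pt_neighbours E v"
proof (rule set_eqI)
  fix w :: vert
  obtain x y where v: "v = (x, y)" by fastforce
  obtain k l where w: "w = (k, l)" by fastforce
  have "w \<in> pt_neighbours (swap_graph E) (prod.swap v) \<longleftrightarrow> (l, k) \<in> pt_neighbours E v"
    unfolding pt_neighbours_def v w swap_graph_iff by (auto simp: insert_commute)
  also have "\<dots> \<longleftrightarrow> w \<in> prod.swap ` pt_neighbours E v"
    unfolding w by (metis image_iff swap_simp swap_swap)
  finally show "w \<in> pt_neighbours (swap_graph E) (prod.swap v) \<longleftrightarrow> w \<in> prod.swap ` pt_neighbours E v" .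
qed

lemma degree_criterion_swap:
  assumes g: "grid_graph a b E" and "degree_criterion a b E"
  shows "degree_criterion b a (swap_graph E)"
proof -
  have card_swap: "card (prod.swap ` X) = card X" for X :: "vert set"
    by (simp add: card_image)
  have "card (neighbours (swap_graph E) v) = card (pt_neighbours (swap_graph E) v)"
    if "v \<in> grid b a" for v
  proof -
    have "prod.swap v \<in> grid a b"
      using that unfolding grid_def by (auto simp: prod.swap_def split: prod.splits)
    then show ?thesis
      using assms(2) neighbours_swap[of E "prod.swap v"] pt_neighbours_swap[of E "prod.swap v"]
      unfolding degree_criterion_iff[OF g] by (simp add: card_swap)
  qed
  then show ?thesis
    unfolding degree_criterion_iff[OF grid_graph_swap[OF g]] by blast
qed

lemma laplacian_swap:
  assumes g: "grid_graph a b E"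
  shows "laplacian (swap_graph E) (prod.swap p) (prod.swap q) = laplacian E p q"
proof -
  have "prod.swap p = prod.swap q \<longleftrightarrow> p = q"
    by (metis swap_swap)
  then show ?thesis
    unfolding laplacian_neighbours[OF grid_graph_loopless[OF g]]
      laplacian_neighbours[OF grid_graph_loopless[OF grid_graph_swap[OF g]]]
      neighbours_swap swap_graph_iff swap_swap by (simp add: card_image)
qed

lemma sep_cone_swap:
  assumes "sep_cone R"
  shows "sep_cone (\<lambda>p q. R (prod.swap p) (prod.swap q))"
proof -
  obtain xs where xs: "\<forall>(c, u, w)\<in>set xs. c \<ge> 0"
    and R: "R = (\<lambda>p q. \<Sum>(c, u, w)\<leftarrow>xs. product_term c u w p q)"
    using assms unfolding sep_cone_def by blast
  have "(\<lambda>p q. R (prod.swap p) (prod.swap q))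
      = (\<lambda>p q. \<Sum>(c, u, w)\<leftarrow>map (\<lambda>(c, u, w). (c, w, u)) xs. product_term c u w p q)"
    unfolding R by (simp add: o_def split_def product_term_def mult_ac)
  moreover have "\<forall>(c, u, w)\<in>set (map (\<lambda>(c, u, w). (c, w, u)) xs). c \<ge> 0"
    using xs by auto
  ultimately show ?thesis
    unfolding sep_cone_def by blast
qed

theorem mainTheorem10:
  fixes a b :: nat and E :: "(nat \<times> nat) set set"
  assumes "grid_graph a b E"
    and "E \<noteq> {}"
    and "row_stratified E \<or> column_stratified E"
  shows "separable a b (rho E) \<longleftrightarrow> degree_criterion a b E"
proof
  assume "separable a b (rho E)"
  then show "degree_criterion a b E"
    using degree_criterion_if_separable assms(1,2) by blast
next
  assume dc: "degree_criterion a b E"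
  obtain u where "u \<in> grid a b"
    using assms(1,2) unfolding grid_graph_def by blast
  then have "a > 0" "b > 0"
    unfolding grid_def by auto
  have "sep_cone (laplacian E)"
    using assms(3)
  proof
    assume "row_stratified E"
    then show ?thesis
      using sep_cone_laplacian_if_row_stratified assms(1) dc by blast
  next
    assume "column_stratified E"
    then have "sep_cone (laplacian (swap_graph E))"
      using sep_cone_laplacian_if_row_stratified grid_graph_swap row_stratified_swap
        degree_criterion_swap assms(1) dc by blast
    moreover have "laplacian E = (\<lambda>p q. laplacian (swap_graph E) (prod.swap p) (prod.swap q))"
      using laplacian_swap[OF assms(1)] by simp
    ultimately show ?thesis
      using sep_cone_swap by metis
  qed
  then show "separable a b (rho E)"
    using separable_if_sep_cone sep_cone_rho trace_rho[OF assms(1,2)] \<open>a > 0\<close> \<open>b > 0\<close> by blast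
qed

end
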